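(* Suppose $\Sigma$ is of type-H. Let $\xi$ be any measure, and let $\lambda,\lambda_1,\lambda_2\in\mathbb R$. Define $q_\xi^*=c_{\xi00}-(c_{\xi01},c_{\xi02})\,Q_\xi^+\,(c_{\xi10},c_{\xi20})'$ and, with $\ell_\lambda=(1,\lambda,\lambda)'$, $\ell_2=(0,1,1)'$, $q_{\xi,2}^*=\ell_\lambda'V_\xi\ell_\lambda-(\ell_\lambda'V_\xi\ell_2)^2(\ell_2'V_\xi\ell_2)^+$. Then $q_{\xi,2}^*=q_\xi^*$. Moreover, if $1+2\lambda\ne0$ and $1+\lambda_1+\lambda_2\ne0$, define, with $\ell_3=(2,-1,-1)'$, $q_{\xi,3}^*=\ell_\lambda'V_\xi\ell_\lambda-(\ell_\lambda'V_\xi\ell_3)^2(\ell_3'V_\xi\ell_3)^+$, and with $\ell=(1,\lambda_1,\lambda_2)'$, $\ell_0=(-1,1+\lambda_2,-\lambda_2)'$, $\ell_1=(-1,-\lambda_1,1+\lambda_1)'$, $L_0=(\ell_0,\ell_1)$, $q_{\xi,1}^*=\ell'V_\xi\ell-\ell'V_\xi L_0(L_0'V_\xi L_0)^+L_0'V_\xi\ell$. Then $(1+2\lambda)^{-2}q_{\xi,3}^*=(1+\lambda_1+\lambda_2)^{-2}q_{\xi,1}^*$.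
   Context: Fix integers $k\ge 2$ and $t\ge 2$. Let $\mathcal S$ be the set of all $t^k$ sequences $s=(t_1,\dots,t_k)$ with entries $t_j\in\{1,\dots,t\}$. For $s\in\mathcal S$ let $T_s$ be the $k\times t$ matrix with $(j,i)$ entry equal to $1$ if $t_j=i$ and $0$ otherwise; let $H$ be the $k\times k$ matrix with $(i,j)$ entry $1$ if $i\equiv j+1\pmod k$ and $0$ otherwise; put $L_s=HT_s$, $R_s=H'T_s$ (a prime denotes transpose). Let $\Sigma$ be a fixed $k\times k$ positive definite matrix, $1_k$ the all-ones vector, and $\tilde B=\Sigma^{-1}-\Sigma^{-1}1_k1_k'\Sigma^{-1}/(1_k'\Sigma^{-1}1_k)$. With $G_0=T_s,G_1=L_s,G_2=R_s$ define for $0\le i,j\le 2$ the $t\times t$ matrices $C_{sij}=G_i'\tilde BG_j$. A measure is a vector $\xi=(p_s)_{s\in\mathcal S}$ with $p_s\ge0$, $\sum_sp_s=1$. Put $C_{\xi ij}=\sum_sp_sC_{sij}$, $c_{\xi ij}=\operatorname{tr}(C_{\xi ij})$, $V_\xi=(c_{\xi ij})_{0\le i,j\le2}$, $Q_\xi=(c_{\xi ij})_{1\le i,j\le2}$. $M^+$ denotes the Moore–Penrose inverse (for a scalar $a$, $a^+=1/a$ if $a\ne0$ and $0^+=0$). The matrix $\Sigma$ is of type-H if $\Sigma=I_k+\eta1_k'+1_k\eta'$ for some $\eta\in\mathbb R^k$ (and is positive definite). *)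

theory Defs
  imports "Jordan_Normal_Form.Matrix"
begin

definition mtrace :: "real mat \<Rightarrow> real" where
  "mtrace A = (\<Sum>i<dim_row A. A $$ (i, i))"

definition minv :: "real mat \<Rightarrow> real mat" where
  "minv A = (THE X. X \<in> carrier_mat (dim_row A) (dim_row A) \<and>
                    A * X = 1\<^sub>m (dim_row A) \<and> X * A = 1\<^sub>m (dim_row A))"

definition mp_inv :: "real mat \<Rightarrow> real mat" where
  "mp_inv A = (THE X. X \<in> carrier_mat (dim_col A) (dim_row A) \<and>
       A * X * A = A \<and> X * A * X = X \<and>
       transpose_mat (A * X) = A * X \<and> transpose_mat (X * A) = X * A)"

definition sc_pinv :: "real \<Rightarrow> real" where
  "sc_pinv a = (if a \<noteq> 0 then 1 / a else 0)"

definition pos_def_mat :: "nat \<Rightarrow> real mat \<Rightarrow> bool" where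
  "pos_def_mat k S \<longleftrightarrow> S \<in> carrier_mat k k \<and> transpose_mat S = S \<and>
     (\<forall>x \<in> carrier_vec k. x \<noteq> 0\<^sub>v k \<longrightarrow> x \<bullet> (S *\<^sub>v x) > 0)"

definition type_H :: "nat \<Rightarrow> real mat \<Rightarrow> bool" where
  "type_H k S \<longleftrightarrow> pos_def_mat k S \<and>
     (\<exists>eta \<in> carrier_vec k. S = 1\<^sub>m k + mat k k (\<lambda>(i, j). eta $ i) + mat k k (\<lambda>(i, j). eta $ j))"

definition seqs :: "nat \<Rightarrow> nat \<Rightarrow> nat list set" where
  "seqs k t = {s. length s = k \<and> set s \<subseteq> {1..t}}"

(* T_s : k x t, entry (j,i) = 1 iff t_j = i   (0-based indices, i.e. t_{j+1} = i+1) *)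
definition Tmat :: "nat \<Rightarrow> nat \<Rightarrow> nat list \<Rightarrow> real mat" where
  "Tmat k t s = mat k t (\<lambda>(j, i). if s ! j = i + 1 then 1 else 0)"

definition Hmat :: "nat \<Rightarrow> real mat" where
  "Hmat k = mat k k (\<lambda>(i, j). if i mod k = (j + 1) mod k then 1 else 0)"

definition Bt :: "nat \<Rightarrow> real mat \<Rightarrow> real mat" where
  "Bt k S = minv S - (1 / (vec k (\<lambda>_. 1) \<bullet> (minv S *\<^sub>v vec k (\<lambda>_. 1)))) \<cdot>\<^sub>m
      (minv S * mat k k (\<lambda>_. 1) * minv S)"

(* G_0 = T_s, G_1 = L_s = H T_s, G_2 = R_s = H' T_s *)
definition Gmat :: "nat \<Rightarrow> nat \<Rightarrow> nat list \<Rightarrow> nat \<Rightarrow> real mat" where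
  "Gmat k t s i = (if i = 0 then Tmat k t s
                   else if i = 1 then Hmat k * Tmat k t s
                   else transpose_mat (Hmat k) * Tmat k t s)"

definition Cs :: "nat \<Rightarrow> nat \<Rightarrow> real mat \<Rightarrow> nat list \<Rightarrow> nat \<Rightarrow> nat \<Rightarrow> real mat" where
  "Cs k t S s i j = transpose_mat (Gmat k t s i) * Bt k S * Gmat k t s j"

definition is_measure :: "nat \<Rightarrow> nat \<Rightarrow> (nat list \<Rightarrow> real) \<Rightarrow> bool" where
  "is_measure k t p \<longleftrightarrow> (\<forall>s \<in> seqs k t. p s \<ge> 0) \<and> (\<Sum>s \<in> seqs k t. p s) = 1"

definition Cxi :: "nat \<Rightarrow> nat \<Rightarrow> real mat \<Rightarrow> (nat list \<Rightarrow> real) \<Rightarrow> nat \<Rightarrow> nat \<Rightarrow> real mat" where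
  "Cxi k t S p i j = mat t t (\<lambda>(a, b). \<Sum>s \<in> seqs k t. p s * (Cs k t S s i j) $$ (a, b))"

definition cxi :: "nat \<Rightarrow> nat \<Rightarrow> real mat \<Rightarrow> (nat list \<Rightarrow> real) \<Rightarrow> nat \<Rightarrow> nat \<Rightarrow> real" where
  "cxi k t S p i j = mtrace (Cxi k t S p i j)"

definition Vxi :: "nat \<Rightarrow> nat \<Rightarrow> real mat \<Rightarrow> (nat list \<Rightarrow> real) \<Rightarrow> real mat" where
  "Vxi k t S p = mat 3 3 (\<lambda>(i, j). cxi k t S p i j)"

definition Qxi :: "nat \<Rightarrow> nat \<Rightarrow> real mat \<Rightarrow> (nat list \<Rightarrow> real) \<Rightarrow> real mat" where
  "Qxi k t S p = mat 2 2 (\<lambda>(i, j). cxi k t S p (i + 1) (j + 1))"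

definition qstar :: "nat \<Rightarrow> nat \<Rightarrow> real mat \<Rightarrow> (nat list \<Rightarrow> real) \<Rightarrow> real" where
  "qstar k t S p = cxi k t S p 0 0 -
     vec_of_list [cxi k t S p 0 1, cxi k t S p 0 2] \<bullet>
       (mp_inv (Qxi k t S p) *\<^sub>v vec_of_list [cxi k t S p 1 0, cxi k t S p 2 0])"

definition qvec :: "real mat \<Rightarrow> real vec \<Rightarrow> real vec \<Rightarrow> real" where
  "qvec V l m = l \<bullet> (V *\<^sub>v l) - (l \<bullet> (V *\<^sub>v m))^2 * sc_pinv (m \<bullet> (V *\<^sub>v m))"

definition qstar2 :: "nat \<Rightarrow> nat \<Rightarrow> real mat \<Rightarrow> (nat list \<Rightarrow> real) \<Rightarrow> real \<Rightarrow> real" where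
  "qstar2 k t S p lam = qvec (Vxi k t S p) (vec_of_list [1, lam, lam]) (vec_of_list [0, 1, 1])"

definition qstar3 :: "nat \<Rightarrow> nat \<Rightarrow> real mat \<Rightarrow> (nat list \<Rightarrow> real) \<Rightarrow> real \<Rightarrow> real" where
  "qstar3 k t S p lam = qvec (Vxi k t S p) (vec_of_list [1, lam, lam]) (vec_of_list [2, -1, -1])"

definition qstar1 :: "nat \<Rightarrow> nat \<Rightarrow> real mat \<Rightarrow> (nat list \<Rightarrow> real) \<Rightarrow> real \<Rightarrow> real \<Rightarrow> real" where
  "qstar1 k t S p l1 l2 =
     (let V = Vxi k t S p; l = vec_of_list [1, l1, l2];
          L0 = mat_of_cols 3 [vec_of_list [-1, 1 + l2, -l2], vec_of_list [-1, -l1, 1 + l1]]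
      in l \<bullet> (V *\<^sub>v l) -
         (transpose_mat L0 *\<^sub>v (V *\<^sub>v l)) \<bullet>
           (mp_inv (transpose_mat L0 * V * L0) *\<^sub>v (transpose_mat L0 *\<^sub>v (V *\<^sub>v l))))"

end

theory Submission
  imports Defs "Jordan_Normal_Form.Determinant"
begin

(*
  Under type-H the matrix B~ is the centering matrix I - J/k: with g = \<Sigma>^-1 1 normalised to
  1' g = 1 one gets B~ \<Sigma> = I - g 1', and for \<Sigma> = I + \<eta> 1' + 1 \<eta>' the vector g is explicit and
  I - g 1' = (I - J/k) \<Sigma>.  Hence every c_\<xi>ij is a trace of centred inner products of the columns
  of T_s, H T_s and H' T_s.  As H permutes rows cyclically and centred inner products are invariant
  under a simultaneous permutation of coordinates, V_\<xi> has the form ((a,b,b),(b,a,c),(b,c,a))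
  and is positive semidefinite.  All four quantities are then explicit rational functions of
  a, b, c and the \<lambda>'s, with the pseudoinverses of symmetric 2 \<times> 2 matrices computed case by case;
  positive semidefiniteness is needed only in the degenerate cases, where it forces b = 0 if
  a + c = 0, and b = c = a if 6a - 8b + 2c = 0.
*)

section \<open>Moore--Penrose inverses\<close>

lemma transpose_mult3:
  fixes P Q R :: "'a :: comm_semiring_0 mat"
  assumes "P \<in> carrier_mat a b" and "Q \<in> carrier_mat b c" and "R \<in> carrier_mat c d"
  shows "transpose_mat (P * Q * R) = transpose_mat R * transpose_mat Q * transpose_mat P"
proof -
  have "transpose_mat (P * Q * R) = transpose_mat R * transpose_mat (P * Q)"
    using assms by (intro transpose_mult) auto
  also have "transpose_mat (P * Q) = transpose_mat Q * transpose_mat P"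
    using assms by (intro transpose_mult) auto
  finally show ?thesis using assms by (simp add: assoc_mult_mat[of _ d c _ b _ a])
qed

lemma penrose_absorb:
  fixes A X Y :: "real mat"
  assumes A: "A \<in> carrier_mat m n" and X: "X \<in> carrier_mat n m" and Y: "Y \<in> carrier_mat n m"
    and XAX: "X * A * X = X" and AX: "transpose_mat (A * X) = A * X"
    and AYA: "A * Y * A = A" and AY: "transpose_mat (A * Y) = A * Y"
  shows "X = X * A * Y"
proof -
  have AXc: "A * X \<in> carrier_mat m m" and AYc: "A * Y \<in> carrier_mat m m" using A X Y by auto
  have "(A * Y) * (A * X) = A * X" using assoc_mult_mat[OF AYc A X] AYA by simp
  then have "A * X = transpose_mat ((A * Y) * (A * X))" using AX by simp
  also have "\<dots> = (A * X) * (A * Y)" using transpose_mult[OF AYc AXc] AX AY by simp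
  finally have "X * (A * X) = (X * (A * X)) * (A * Y)"
    using assoc_mult_mat[OF X AXc AYc] by simp
  then show ?thesis using XAX A X Y by (simp add: assoc_mult_mat[of X n m A n])
qed

lemma mp_inv_unique:
  fixes A X Y :: "real mat"
  assumes A: "A \<in> carrier_mat m n" and X: "X \<in> carrier_mat n m" and Y: "Y \<in> carrier_mat n m"
    and x1: "A * X * A = A" and x2: "X * A * X = X" and x3: "transpose_mat (A * X) = A * X"
    and x4: "transpose_mat (X * A) = X * A"
    and y1: "A * Y * A = A" and y2: "Y * A * Y = Y" and y3: "transpose_mat (A * Y) = A * Y"
    and y4: "transpose_mat (Y * A) = Y * A"
  shows "X = Y"
proof -
  have At: "transpose_mat A \<in> carrier_mat n m" and Xt: "transpose_mat X \<in> carrier_mat m n"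
    and Yt: "transpose_mat Y \<in> carrier_mat m n" using A X Y by auto
  text \<open>The Penrose conditions are invariant under (A, X, Y) \<mapsto> (A', Y', X').\<close>
  have "transpose_mat Y = transpose_mat Y * transpose_mat A * transpose_mat X"
  proof (rule penrose_absorb[OF At Yt Xt])
    show "transpose_mat Y * transpose_mat A * transpose_mat Y = transpose_mat Y"
      using transpose_mult3[OF Y A Y] y2 by simp
    show "transpose_mat A * transpose_mat X * transpose_mat A = transpose_mat A"
      using transpose_mult3[OF A X A] x1 by simp
    show "transpose_mat (transpose_mat A * transpose_mat Y) = transpose_mat A * transpose_mat Y"
      using transpose_mult[OF Y A] y4 by simp
    show "transpose_mat (transpose_mat A * transpose_mat X) = transpose_mat A * transpose_mat X"
      using transpose_mult[OF X A] x4 by simp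
  qed
  then have "Y = X * A * Y" using transpose_mult3[OF Yt At Xt] by simp
  moreover have "X = X * A * Y" by (rule penrose_absorb[OF A X Y x2 x3 y1 y3])
  ultimately show ?thesis by simp
qed

lemma mp_inv_eqI:
  assumes A: "A \<in> carrier_mat m n" and X: "X \<in> carrier_mat n m"
    and "A * X * A = A" and "X * A * X = X" and "transpose_mat (A * X) = A * X"
    and "transpose_mat (X * A) = X * A"
  shows "mp_inv A = X"
  unfolding mp_inv_def
proof (rule the_equality)
  fix Y assume "Y \<in> carrier_mat (dim_col A) (dim_row A) \<and> A * Y * A = A \<and> Y * A * Y = Y \<and>
    transpose_mat (A * Y) = A * Y \<and> transpose_mat (Y * A) = Y * A"
  then show "Y = X" using mp_inv_unique[OF A X, of Y] assms by auto
qed (use assms in auto)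

lemma smult_smult_mat: "a \<cdot>\<^sub>m (b \<cdot>\<^sub>m A) = (a * b :: 'a :: semigroup_mult) \<cdot>\<^sub>m A"
  by (rule eq_matI) (auto simp: mult.assoc)

lemma transpose_smult_mat: "transpose_mat (a \<cdot>\<^sub>m A) = a \<cdot>\<^sub>m transpose_mat A"
  by (rule eq_matI) auto

text \<open>A symmetric A with A * A = \<tau> \<cdot> A is \<tau> times an orthogonal projection.\<close>
lemma mp_inv_idempotent_multiple:
  fixes A :: "real mat"
  assumes A: "A \<in> carrier_mat n n" and sym: "transpose_mat A = A"
    and sq: "A * A = \<tau> \<cdot>\<^sub>m A" and \<tau>: "\<tau> \<noteq> 0"
  shows "mp_inv A = (1 / \<tau>^2) \<cdot>\<^sub>m A"
proof -
  have AX: "A * ((1 / \<tau>^2) \<cdot>\<^sub>m A) = (1 / \<tau>) \<cdot>\<^sub>m A"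
    using A \<tau> by (simp add: mult_smult_distrib[OF A A] sq smult_smult_mat power2_eq_square)
  have XA: "(1 / \<tau>^2) \<cdot>\<^sub>m A * A = (1 / \<tau>) \<cdot>\<^sub>m A"
    using A \<tau> by (simp add: mult_smult_assoc_mat[OF A A] sq smult_smult_mat power2_eq_square)
  show ?thesis
  proof (rule mp_inv_eqI[OF A])
    show "A * ((1 / \<tau>^2) \<cdot>\<^sub>m A) * A = A"
      using A \<tau> by (auto simp: AX mult_smult_assoc_mat[OF A A] sq smult_smult_mat intro!: eq_matI)
    show "(1 / \<tau>^2) \<cdot>\<^sub>m A * A * ((1 / \<tau>^2) \<cdot>\<^sub>m A) = (1 / \<tau>^2) \<cdot>\<^sub>m A"
      unfolding XA mult_smult_assoc_mat[OF A smult_carrier_mat[OF A]] AX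
      using \<tau> by (simp add: smult_smult_mat power2_eq_square)
  qed (use A sym AX XA in \<open>auto simp: transpose_smult_mat\<close>)
qed

section \<open>2 \<times> 2 matrices\<close>

definition mat2 :: "real \<Rightarrow> real \<Rightarrow> real \<Rightarrow> real \<Rightarrow> real mat" where
  "mat2 a b c d = mat 2 2 (\<lambda>(i, j). if i = 0 then (if j = 0 then a else b) else (if j = 0 then c else d))"

lemma less_2_cases: "i < (2::nat) \<longleftrightarrow> i = 0 \<or> i = 1" by auto

lemma mat2_carrier [simp]: "mat2 a b c d \<in> carrier_mat 2 2"
  by (simp add: mat2_def)

lemma mat2_mult:
  "mat2 a b c d * mat2 a' b' c' d' = mat2 (a*a' + b*c') (a*b' + b*d') (c*a' + d*c') (c*b' + d*d')"
  by (rule eq_matI) (auto simp: mat2_def scalar_prod_def less_2_cases numeral_2_eq_2)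

lemma transpose_mat2: "transpose_mat (mat2 a b c d) = mat2 a c b d"
  by (rule eq_matI) (auto simp: mat2_def less_2_cases)

lemma mat2_eq_iff: "mat2 a b c d = mat2 a' b' c' d' \<longleftrightarrow> a = a' \<and> b = b' \<and> c = c' \<and> d = d'"
proof
  assume eq: "mat2 a b c d = mat2 a' b' c' d'"
  have "mat2 a b c d $$ (i, j) = mat2 a' b' c' d' $$ (i, j)" for i j using eq by simp
  from this[of 0 0] this[of 0 1] this[of 1 0] this[of 1 1]
  show "a = a' \<and> b = b' \<and> c = c' \<and> d = d'" by (simp add: mat2_def)
qed simp

lemma one_mat2: "1\<^sub>m 2 = mat2 1 0 0 1"
  by (rule eq_matI) (auto simp: mat2_def less_2_cases)

lemma mat2_mult_vec: "mat2 a b c d *\<^sub>v vec_of_list [x, y] = vec_of_list [a*x + b*y, c*x + d*y]"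
  by (rule eq_vecI) (auto simp: mat2_def scalar_prod_def less_2_cases numeral_2_eq_2 less_Suc_eq)

lemma scalar_prod_vec2: "vec_of_list [x, y] \<bullet> vec_of_list [x', y'] = x*x' + (y*y' :: real)"
  by (simp add: scalar_prod_def numeral_2_eq_2)

lemma mp_inv_mat2_det_nonzero:
  assumes D: "a*d - b*c \<noteq> 0"
  shows "mp_inv (mat2 a b c d) =
    mat2 (d / (a*d - b*c)) (- b / (a*d - b*c)) (- c / (a*d - b*c)) (a / (a*d - b*c))"
    (is "_ = ?X")
proof -
  have inv: "mat2 a b c d * ?X = 1\<^sub>m 2" "?X * mat2 a b c d = 1\<^sub>m 2"
    unfolding mat2_mult one_mat2 mat2_eq_iff using D
    by (auto simp: diff_divide_distrib[symmetric] add_divide_distrib[symmetric] algebra_simps)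
  show ?thesis
  proof (rule mp_inv_eqI[of _ 2 2])
    show "mat2 a b c d * ?X * mat2 a b c d = mat2 a b c d"
      unfolding inv(1) by (simp add: one_mat2 mat2_mult)
    show "?X * mat2 a b c d * ?X = ?X"
      unfolding inv(2) by (simp add: one_mat2 mat2_mult)
  qed (simp_all only: inv one_mat2 transpose_mat2 mat2_carrier)
qed

lemma smult_mat2: "s \<cdot>\<^sub>m mat2 a b c d = mat2 (s*a) (s*b) (s*c) (s*d)"
  by (rule eq_matI) (auto simp: mat2_def)

lemma mp_inv_mat2_rank_one:
  assumes det: "b*b = a*d"
  shows "mp_inv (mat2 a b b d) =
    mat2 (a / (a + d)^2) (b / (a + d)^2) (b / (a + d)^2) (d / (a + d)^2)"
proof (cases "a + d = 0")
  case True
  have "a*a + b*b = a*(a + d)" using det by (simp add: algebra_simps)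
  then have "a*a + b*b = 0" using True by simp
  then have "a = 0" "b = 0" "d = 0" using True by auto
  then show ?thesis by (intro mp_inv_eqI[of _ 2 2]) (auto simp: mat2_mult transpose_mat2)
next
  case False
  have "mat2 a b b d * mat2 a b b d = (a + d) \<cdot>\<^sub>m mat2 a b b d"
    unfolding mat2_mult smult_mat2 mat2_eq_iff using det by (simp add: algebra_simps)
  from mp_inv_idempotent_multiple[OF mat2_carrier _ this False]
  show ?thesis by (simp add: transpose_mat2 smult_mat2)
qed

lemma quadratic_form_mp_inv_mat2_equal_entries:
  "vec_of_list [b, b] \<bullet> (mp_inv (mat2 a c c a) *\<^sub>v vec_of_list [b, b]) = 2*b*b * sc_pinv (a + c)"
proof (cases "a*a - c*c = 0")
  case False
  have D: "a*a - c*c = (a + c) * (a - c)" by (simp add: algebra_simps)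
  then have ne: "a + c \<noteq> 0" "a - c \<noteq> 0" using False by auto
  define u where "u = 1 / (a*a - c*c)"
  have u: "u * (a - c) = 1 / (a + c)" unfolding u_def D using ne by simp
  have inv: "mp_inv (mat2 a c c a) = mat2 (a*u) (- c*u) (- c*u) (a*u)"
    unfolding mp_inv_mat2_det_nonzero[OF False] u_def by simp
  have "vec_of_list [b, b] \<bullet> (mp_inv (mat2 a c c a) *\<^sub>v vec_of_list [b, b]) =
      2*b*b * (u * (a - c))"
    unfolding inv mat2_mult_vec scalar_prod_vec2 by (simp add: algebra_simps)
  then show ?thesis unfolding u sc_pinv_def using ne by simp
next
  case True
  then have cc: "c*c = a*a" by simp
  show ?thesis
  proof (cases "a + c = 0")
    case True
    then have "c = - a" by simp
    then show ?thesis
      unfolding mp_inv_mat2_rank_one[OF cc] mat2_mult_vec scalar_prod_vec2 sc_pinv_def by simp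
  next
    case False
    have "(a + c) * (a - c) = 0" using cc by (simp add: algebra_simps)
    with False have "c = a" by simp
    with False show ?thesis
      unfolding mp_inv_mat2_rank_one[OF cc] mat2_mult_vec scalar_prod_vec2 sc_pinv_def
      by (simp add: field_simps power2_eq_square)
  qed
qed

text \<open>The matrix is (d1 u u' + d2 w w') / 4 and the vector is (W w - U u) / 2, for the basis
  u = (1, 1), w = (p, -r) of the plane; the form therefore decouples along u and w.\<close>
lemma quadratic_form_mp_inv_mat2_rank_two:
  fixes d1 d2 p r U W :: real
  assumes d1: "d1 \<noteq> 0" and pr: "p + r \<noteq> 0" and W: "d2 = 0 \<Longrightarrow> W = 0"
  defines "y \<equiv> vec_of_list [(- U + p*W) / 2, (- U - r*W) / 2]"
  shows "y \<bullet> (mp_inv (mat2 ((d1 + p^2*d2) / 4) ((d1 - p*r*d2) / 4) ((d1 - p*r*d2) / 4)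
      ((d1 + r^2*d2) / 4)) *\<^sub>v y) = U^2 / d1 + W^2 * sc_pinv d2"
proof (cases "d2 = 0")
  case True
  have M: "mat2 ((d1 + p^2*d2) / 4) ((d1 - p*r*d2) / 4) ((d1 - p*r*d2) / 4) ((d1 + r^2*d2) / 4) =
      mat2 (d1 / 4) (d1 / 4) (d1 / 4) (d1 / 4)" using True by simp
  have inv: "mp_inv (mat2 (d1 / 4) (d1 / 4) (d1 / 4) (d1 / 4)) = mat2 (1/d1) (1/d1) (1/d1) (1/d1)"
    unfolding mp_inv_mat2_rank_one[OF refl] using d1 by (simp add: field_simps power2_eq_square)
  have y: "y = vec_of_list [- U / 2, - U / 2]" unfolding y_def using W[OF True] by simp
  show ?thesis unfolding M inv y mat2_mult_vec scalar_prod_vec2 using True d1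
    by (simp add: sc_pinv_def field_simps power2_eq_square)
next
  case False
  define D where "D = (p + r)^2 * d1 * d2 / 16"
  have D0: "D \<noteq> 0" unfolding D_def using d1 pr False by simp
  have det: "(d1 + p^2*d2) / 4 * ((d1 + r^2*d2) / 4) - (d1 - p*r*d2) / 4 * ((d1 - p*r*d2) / 4) = D"
    unfolding D_def by (simp add: field_simps power2_eq_square)
  have "y \<bullet> (mp_inv (mat2 ((d1 + p^2*d2) / 4) ((d1 - p*r*d2) / 4) ((d1 - p*r*d2) / 4)
      ((d1 + r^2*d2) / 4)) *\<^sub>v y) = (p + r)^2 * (d1 * W^2 + d2 * U^2) / (16 * D)"
    unfolding mp_inv_mat2_det_nonzero[of "(d1 + p^2*d2) / 4" "(d1 + r^2*d2) / 4"
        "(d1 - p*r*d2) / 4" "(d1 - p*r*d2) / 4", unfolded det, OF D0]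
      y_def mat2_mult_vec scalar_prod_vec2
    using D0 by (simp add: field_simps power2_eq_square)
  also have "\<dots> = (d1 * W^2 + d2 * U^2) / (d1 * d2)"
    unfolding D_def using pr by (simp add: mult.assoc)
  also have "\<dots> = U^2 / d1 + W^2 * sc_pinv d2"
    unfolding sc_pinv_def using d1 False by (simp add: field_simps)
  finally show ?thesis .
qed

section \<open>The pattern of the information matrix and its quadratic forms\<close>

definition vmat :: "real \<Rightarrow> real \<Rightarrow> real \<Rightarrow> real mat" where
  "vmat a b c = mat 3 3 (\<lambda>(i, j). if i = j then a else if i = 0 \<or> j = 0 then b else c)"

definition vmat_psd :: "real \<Rightarrow> real \<Rightarrow> real \<Rightarrow> bool" where
  "vmat_psd a b c \<longleftrightarrow>
     (\<forall>x y z. a * (x*x + y*y + z*z) + 2*b * (x*y + x*z) + 2*c * (y*z) \<ge> 0)"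

lemma less_3_cases: "i < (3::nat) \<longleftrightarrow> i = 0 \<or> i = 1 \<or> i = 2" by auto

lemma vmat_carrier [simp]: "vmat a b c \<in> carrier_mat 3 3"
  by (simp add: vmat_def)

lemma vec3_carrier [simp]: "vec_of_list [x, y, z :: real] \<in> carrier_vec 3"
  by (simp add: carrier_dim_vec)

lemma vmat_mult_vec:
  "vmat a b c *\<^sub>v vec_of_list [x, y, z] =
     vec_of_list [a*x + b*y + b*z, b*x + a*y + c*z, b*x + c*y + a*z]"
  by (rule eq_vecI)
    (auto simp: vmat_def scalar_prod_def less_3_cases numeral_3_eq_3 less_Suc_eq)

lemma scalar_prod_vec3: "vec_of_list [x, y, z] \<bullet> vec_of_list [x', y', z'] = x*x' + y*y' + (z*z' :: real)"
  by (simp add: scalar_prod_def numeral_3_eq_3)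

lemma linear_coeff_zero_if_nonneg:
  fixes \<alpha> \<beta> :: real
  assumes "\<And>t. \<alpha>*t*t + \<beta>*t \<ge> 0"
  shows "\<beta> = 0"
proof (rule ccontr)
  assume nz: "\<beta> \<noteq> 0"
  have "\<alpha> + \<beta> \<ge> 0" "\<alpha> - \<beta> \<ge> 0" using assms[of 1] assms[of "-1"] by auto
  then have pos: "\<alpha> + 1 > 0" by linarith
  define t where "t = - \<beta> / (\<alpha> + 1)"
  have t: "t * (\<alpha> + 1) = - \<beta>" using pos unfolding t_def by simp
  have "(\<alpha>*t*t + \<beta>*t) * ((\<alpha> + 1) * (\<alpha> + 1)) =
      \<alpha> * (t * (\<alpha> + 1)) * (t * (\<alpha> + 1)) + \<beta> * (t * (\<alpha> + 1)) * (\<alpha> + 1)"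
    by (simp add: algebra_simps)
  also have "\<dots> = - (\<beta> * \<beta>)" unfolding t by (simp add: algebra_simps)
  also have "\<dots> < 0" using nz by (auto simp: zero_less_mult_iff linorder_neq_iff)
  finally show False using assms[of t] pos by (simp add: mult_less_0_iff)
qed

lemma vmat_psd_b_zero:
  assumes "vmat_psd a b c" and "a + c = 0"
  shows "b = 0"
proof -
  have "a*t*t + (4*b)*t \<ge> 0" for t
  proof -
    have "a * (t*t + 1*1 + 1*1) + 2*b * (t*1 + t*1) + 2*c * (1*1) \<ge> 0"
      using assms(1) unfolding vmat_psd_def by blast
    then show ?thesis using assms(2) by (simp add: algebra_simps)
  qed
  then have "4*b = 0" by (rule linear_coeff_zero_if_nonneg)
  then show ?thesis by simp
qed

lemma vmat_psd_degenerate: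
  assumes "vmat_psd a b c" and "6*a - 8*b + 2*c = 0"
  shows "b = a" and "c = a"
proof -
  have "a*t*t + (4*a - 4*b)*t \<ge> 0" for t
  proof -
    have "a * ((t+2)*(t+2) + (-1)*(-1) + (-1)*(-1)) + 2*b * ((t+2)*(-1) + (t+2)*(-1))
        + 2*c * ((-1)*(-1)) \<ge> 0"
      using assms(1) unfolding vmat_psd_def by blast
    then show ?thesis using assms(2) by (simp add: algebra_simps)
  qed
  then have "4*a - 4*b = 0" by (rule linear_coeff_zero_if_nonneg)
  then show "b = a" by simp
  then show "c = a" using assms(2) by simp
qed

lemma qvec_vmat_ell2:
  assumes psd: "vmat_psd a b c"
  shows "qvec (vmat a b c) (vec_of_list [1, lam, lam]) (vec_of_list [0, 1, 1]) =
    a - 2*b*b * sc_pinv (a + c)"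
proof -
  have "qvec (vmat a b c) (vec_of_list [1, lam, lam]) (vec_of_list [0, 1, 1]) =
      a + 4*lam*b + 2*lam*lam*(a + c) - (2*b + 2*lam*(a + c))^2 * sc_pinv (2*(a + c))"
    unfolding qvec_def vmat_mult_vec scalar_prod_vec3 by (simp add: algebra_simps)
  also have "\<dots> = a - 2*b*b * sc_pinv (a + c)"
  proof (cases "a + c = 0")
    case True
    then show ?thesis using vmat_psd_b_zero[OF psd True] by (simp add: sc_pinv_def)
  next
    case False
    then show ?thesis by (simp add: sc_pinv_def field_simps power2_eq_square)
  qed
  finally show ?thesis .
qed

lemma qvec_vmat_e0_ell3:
  "qvec (vmat a b c) (vec_of_list [1, 0, 0]) (vec_of_list [2, -1, -1]) =
    a - (2*(a - b))^2 * sc_pinv (6*a - 8*b + 2*c)"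
  unfolding qvec_def vmat_mult_vec scalar_prod_vec3 by (simp add: algebra_simps)

lemma qvec_vmat_ell3:
  assumes psd: "vmat_psd a b c"
  shows "qvec (vmat a b c) (vec_of_list [1, lam, lam]) (vec_of_list [2, -1, -1]) =
    (1 + 2*lam)^2 * qvec (vmat a b c) (vec_of_list [1, 0, 0]) (vec_of_list [2, -1, -1])"
proof -
  have "qvec (vmat a b c) (vec_of_list [1, lam, lam]) (vec_of_list [2, -1, -1]) =
      a + 4*lam*b + 2*lam*lam*(a + c)
      - (2*(a - b) + 2*lam*(2*b - a - c))^2 * sc_pinv (6*a - 8*b + 2*c)"
    unfolding qvec_def vmat_mult_vec scalar_prod_vec3 by (simp add: algebra_simps)
  also have "\<dots> = (1 + 2*lam)^2 * (a - (2*(a - b))^2 * sc_pinv (6*a - 8*b + 2*c))"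
  proof (cases "6*a - 8*b + 2*c = 0")
    case True
    then show ?thesis using vmat_psd_degenerate[OF psd True]
      by (simp add: sc_pinv_def power2_eq_square algebra_simps)
  next
    case False
    then show ?thesis by (simp add: sc_pinv_def field_simps power2_eq_square)
  qed
  finally show ?thesis unfolding qvec_vmat_e0_ell3 .
qed

definition qmat :: "real mat \<Rightarrow> real vec \<Rightarrow> real mat \<Rightarrow> real" where
  "qmat V l L = l \<bullet> (V *\<^sub>v l) -
     (transpose_mat L *\<^sub>v (V *\<^sub>v l)) \<bullet> (mp_inv (transpose_mat L * V * L) *\<^sub>v (transpose_mat L *\<^sub>v (V *\<^sub>v l)))"

lemma gram_mat_of_cols2:
  fixes P Q :: "real vec"
  assumes P: "P \<in> carrier_vec n" and Q: "Q \<in> carrier_vec n" and V: "V \<in> carrier_mat n n"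
  shows "transpose_mat (mat_of_cols n [P, Q]) * V * mat_of_cols n [P, Q] =
    mat2 (P \<bullet> (V *\<^sub>v P)) (P \<bullet> (V *\<^sub>v Q)) (Q \<bullet> (V *\<^sub>v P)) (Q \<bullet> (V *\<^sub>v Q))"
proof -
  let ?L = "mat_of_cols n [P, Q]"
  have L: "?L \<in> carrier_mat n 2" using mat_of_cols_carrier(1)[of n "[P, Q]"] by (simp add: numeral_2_eq_2)
  have "transpose_mat ?L * V * ?L = transpose_mat ?L * (V * ?L)" using L V by simp
  also have "\<dots> = mat2 (P \<bullet> (V *\<^sub>v P)) (P \<bullet> (V *\<^sub>v Q)) (Q \<bullet> (V *\<^sub>v P)) (Q \<bullet> (V *\<^sub>v Q))"
  proof (rule eq_matI)
    fix i j assume "i < dim_row (mat2 (P \<bullet> (V *\<^sub>v P)) (P \<bullet> (V *\<^sub>v Q)) (Q \<bullet> (V *\<^sub>v P)) (Q \<bullet> (V *\<^sub>v Q)))"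
      and "j < dim_col (mat2 (P \<bullet> (V *\<^sub>v P)) (P \<bullet> (V *\<^sub>v Q)) (Q \<bullet> (V *\<^sub>v P)) (Q \<bullet> (V *\<^sub>v Q)))"
    then have i: "i < 2" and j: "j < 2" by (auto simp: mat2_def)
    have "(transpose_mat ?L * (V * ?L)) $$ (i, j) = col ?L i \<bullet> (V *\<^sub>v col ?L j)"
      using i j L V by (simp add: col_mult2[OF V L j])
    then show "(transpose_mat ?L * (V * ?L)) $$ (i, j) =
        mat2 (P \<bullet> (V *\<^sub>v P)) (P \<bullet> (V *\<^sub>v Q)) (Q \<bullet> (V *\<^sub>v P)) (Q \<bullet> (V *\<^sub>v Q)) $$ (i, j)"
      using i j P Q by (auto simp: less_2_cases mat2_def)
  qed (use L in \<open>auto simp: mat2_def\<close>)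
  finally show ?thesis .
qed

lemma transpose_mat_of_cols2_mult_vec:
  fixes P Q :: "real vec"
  assumes "P \<in> carrier_vec n" and "Q \<in> carrier_vec n" and "w \<in> carrier_vec n"
  shows "transpose_mat (mat_of_cols n [P, Q]) *\<^sub>v w = vec_of_list [P \<bullet> w, Q \<bullet> w]"
  by (rule eq_vecI) (use assms in \<open>auto simp: less_2_cases less_Suc_eq\<close>)

lemma qmat_mat_of_cols2:
  fixes P Q :: "real vec"
  assumes P: "P \<in> carrier_vec n" and Q: "Q \<in> carrier_vec n" and l: "l \<in> carrier_vec n"
    and V: "V \<in> carrier_mat n n" and sym: "Q \<bullet> (V *\<^sub>v P) = P \<bullet> (V *\<^sub>v Q)"
  shows "qmat V l (mat_of_cols n [P, Q]) = l \<bullet> (V *\<^sub>v l) -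
    vec_of_list [P \<bullet> (V *\<^sub>v l), Q \<bullet> (V *\<^sub>v l)] \<bullet>
      (mp_inv (mat2 (P \<bullet> (V *\<^sub>v P)) (P \<bullet> (V *\<^sub>v Q)) (P \<bullet> (V *\<^sub>v Q)) (Q \<bullet> (V *\<^sub>v Q))) *\<^sub>v
        vec_of_list [P \<bullet> (V *\<^sub>v l), Q \<bullet> (V *\<^sub>v l)])"
  unfolding qmat_def gram_mat_of_cols2[OF P Q V] sym
    transpose_mat_of_cols2_mult_vec[OF P Q mult_mat_vec_carrier[OF V l]] ..

lemma qmat_vmat_L0:
  assumes psd: "vmat_psd a b c" and s0: "1 + l1 + l2 \<noteq> 0"
  shows "qmat (vmat a b c) (vec_of_list [1, l1, l2])
      (mat_of_cols 3 [vec_of_list [-1, 1 + l2, -l2], vec_of_list [-1, -l1, 1 + l1]]) =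
    (1 + l1 + l2)^2 * qvec (vmat a b c) (vec_of_list [1, 0, 0]) (vec_of_list [2, -1, -1])"
proof -
  define P where "P = vec_of_list [-1, 1 + l2, -l2]"
  define Q where "Q = vec_of_list [-1, -l1, 1 + l1]"
  define l where "l = vec_of_list [1, l1, l2]"
  define V where "V = vmat a b c"
  define d1 where "d1 = 6*a - 8*b + 2*c"
  define d2 where "d2 = 2*(a - c)"
  define g where "g = 2*(a - b)"
  define p where "p = 1 + 2*l2"
  define r where "r = 1 + 2*l1"
  define s where "s = 1 + l1 + l2"
  define x where "x = - (l1 + l2) / 2"
  define y where "y = (l1 - l2) / 2"
  define U where "U = s*g + x*d1"
  define W where "W = y*d2"
  have carrier: "P \<in> carrier_vec 3" "Q \<in> carrier_vec 3" "l \<in> carrier_vec 3" "V \<in> carrier_mat 3 3"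
    unfolding P_def Q_def l_def V_def by (simp_all only: vec3_carrier vmat_carrier)
  have PVP: "P \<bullet> (V *\<^sub>v P) = (d1 + p^2*d2) / 4"
    unfolding P_def V_def vmat_mult_vec scalar_prod_vec3 d1_def d2_def p_def
    by (simp add: algebra_simps power2_eq_square)
  have PVQ: "P \<bullet> (V *\<^sub>v Q) = (d1 - p*r*d2) / 4" and QVP: "Q \<bullet> (V *\<^sub>v P) = (d1 - p*r*d2) / 4"
    unfolding P_def Q_def V_def vmat_mult_vec scalar_prod_vec3 d1_def d2_def p_def r_def
    by (simp_all add: algebra_simps)
  have QVQ: "Q \<bullet> (V *\<^sub>v Q) = (d1 + r^2*d2) / 4"
    unfolding Q_def V_def vmat_mult_vec scalar_prod_vec3 d1_def d2_def r_def
    by (simp add: algebra_simps power2_eq_square)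
  have PVl: "P \<bullet> (V *\<^sub>v l) = (- U + p*W) / 2"
    unfolding P_def V_def l_def vmat_mult_vec scalar_prod_vec3 U_def W_def s_def g_def x_def y_def
      d1_def d2_def p_def
    by (simp add: field_simps)
  have QVl: "Q \<bullet> (V *\<^sub>v l) = (- U - r*W) / 2"
    unfolding Q_def V_def l_def vmat_mult_vec scalar_prod_vec3 U_def W_def s_def g_def x_def y_def
      d1_def d2_def r_def
    by (simp add: field_simps)
  have lVl: "l \<bullet> (V *\<^sub>v l) = s^2*a + 2*s*x*g + x^2*d1 + y^2*d2"
    unfolding V_def l_def vmat_mult_vec scalar_prod_vec3 s_def g_def x_def y_def d1_def d2_def
    by (simp add: field_simps power2_eq_square)
  have q0: "qvec V (vec_of_list [1, 0, 0]) (vec_of_list [2, -1, -1]) = a - g^2 * sc_pinv d1"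
    unfolding V_def qvec_vmat_e0_ell3 g_def d1_def ..
  have "qmat V l (mat_of_cols 3 [P, Q]) = l \<bullet> (V *\<^sub>v l) -
      vec_of_list [(- U + p*W) / 2, (- U - r*W) / 2] \<bullet>
        (mp_inv (mat2 ((d1 + p^2*d2) / 4) ((d1 - p*r*d2) / 4) ((d1 - p*r*d2) / 4) ((d1 + r^2*d2) / 4))
          *\<^sub>v vec_of_list [(- U + p*W) / 2, (- U - r*W) / 2])"
    unfolding qmat_mat_of_cols2[OF carrier(1,2,3,4) QVP[folded PVQ]] PVP PVQ QVQ PVl QVl ..
  also have "\<dots> = s^2 * qvec V (vec_of_list [1, 0, 0]) (vec_of_list [2, -1, -1])"
  proof (cases "d1 = 0")
    case True
    have "b = a" "c = a" using vmat_psd_degenerate[OF psd] True unfolding d1_def by auto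
    then have "d2 = 0" "g = 0" unfolding d2_def g_def by simp_all
    with True have "U = 0" "W = 0" unfolding U_def W_def by simp_all
    have "mp_inv (mat2 0 0 0 0) = mat2 0 0 0 0" using mp_inv_mat2_rank_one[of 0 0 0] by simp
    then show ?thesis using \<open>d2 = 0\<close> \<open>g = 0\<close> \<open>U = 0\<close> \<open>W = 0\<close> True
      unfolding lVl q0 by (simp add: mat2_mult_vec scalar_prod_vec2 del: vec_of_list_Cons)
  next
    case False
    have "p + r \<noteq> 0" using s0 unfolding p_def r_def by simp
    moreover have "d2 = 0 \<Longrightarrow> W = 0" unfolding W_def by simp
    ultimately have "vec_of_list [(- U + p*W) / 2, (- U - r*W) / 2] \<bullet>
        (mp_inv (mat2 ((d1 + p^2*d2) / 4) ((d1 - p*r*d2) / 4) ((d1 - p*r*d2) / 4) ((d1 + r^2*d2) / 4))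
          *\<^sub>v vec_of_list [(- U + p*W) / 2, (- U - r*W) / 2]) = U^2 / d1 + W^2 * sc_pinv d2"
      by (rule quadratic_form_mp_inv_mat2_rank_two[OF False])
    moreover have "U^2 / d1 = s^2*g^2 / d1 + 2*s*x*g + x^2*d1"
      unfolding U_def using False by (simp add: field_simps power2_eq_square)
    ultimately show ?thesis unfolding lVl q0 W_def sc_pinv_def using False
      by (simp add: field_simps power2_eq_square)
  qed
  finally show ?thesis unfolding P_def Q_def l_def V_def s_def .
qed

section \<open>Centering\<close>

definition centered_inner :: "nat \<Rightarrow> (nat \<Rightarrow> real) \<Rightarrow> (nat \<Rightarrow> real) \<Rightarrow> real" where
  "centered_inner k v w = (\<Sum>u<k. v u * w u) - (\<Sum>u<k. v u) * (\<Sum>u<k. w u) / real k"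

lemma centered_inner_commute: "centered_inner k v w = centered_inner k w v"
  unfolding centered_inner_def by (simp add: mult.commute)

lemma centered_inner_self_nonneg: "centered_inner k v v \<ge> 0"
proof (cases "k = 0")
  case False
  define m where "m = (\<Sum>u<k. v u) / real k"
  have "centered_inner k v v = (\<Sum>u<k. (v u - m)^2)"
    using False unfolding centered_inner_def m_def
    by (simp add: power2_diff sum.distrib sum_subtractf sum_distrib_left[symmetric] sum_distrib_right[symmetric]
        sum_divide_distrib[symmetric] field_simps power2_eq_square)
  then show ?thesis by (simp add: sum_nonneg)
qed (simp add: centered_inner_def)

lemma centered_inner_quadratic:
  "centered_inner k (\<lambda>u. x * f u + y * g u + z * h u) (\<lambda>u. x * f u + y * g u + z * h u) =
    x*x * centered_inner k f f + y*y * centered_inner k g g + z*z * centered_inner k h h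
    + 2*x*y * centered_inner k f g + 2*x*z * centered_inner k f h + 2*y*z * centered_inner k g h"
  unfolding centered_inner_def
  by (simp add: sum.distrib sum_distrib_left sum_divide_distrib algebra_simps add_divide_distrib diff_divide_distrib)

lemma centered_inner_reindex:
  assumes "bij_betw \<pi> {..<k} {..<k}"
  shows "centered_inner k (v \<circ> \<pi>) (w \<circ> \<pi>) = centered_inner k v w"
  unfolding centered_inner_def comp_def
  using sum.reindex_bij_betw[OF assms, of "\<lambda>u. v u * w u"] sum.reindex_bij_betw[OF assms, of v]
    sum.reindex_bij_betw[OF assms, of w]
  by simp

lemma centered_inner_cong:
  assumes "\<And>u. u < k \<Longrightarrow> v u = v' u" and "\<And>u. u < k \<Longrightarrow> w u = w' u"
  shows "centered_inner k v w = centered_inner k v' w'"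
proof -
  have "(\<Sum>u<k. v u * w u) = (\<Sum>u<k. v' u * w' u)"
    and "sum v {..<k} = sum v' {..<k}" and "sum w {..<k} = sum w' {..<k}"
    using assms by (auto intro!: sum.cong)
  then show ?thesis unfolding centered_inner_def by simp
qed

definition centering_mat :: "nat \<Rightarrow> real mat" where
  "centering_mat k = 1\<^sub>m k - (1 / real k) \<cdot>\<^sub>m mat k k (\<lambda>_. 1)"

lemma centering_mat_carrier [simp]: "centering_mat k \<in> carrier_mat k k"
  unfolding centering_mat_def by (rule minus_carrier_mat) simp

lemma centering_mat_dims [simp]: "dim_row (centering_mat k) = k" "dim_col (centering_mat k) = k"
  using centering_mat_carrier by blast+

lemma centering_mat_mult_entry:
  assumes C: "C \<in> carrier_mat k n" and u: "u < k" and a: "a < n"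
  shows "(centering_mat k * C) $$ (u, a) = C $$ (u, a) - (\<Sum>v<k. C $$ (v, a)) / real k"
proof -
  have "(centering_mat k * C) $$ (u, a) =
      (\<Sum>v<k. (if u = v then C $$ (v, a) else 0) - C $$ (v, a) / real k)"
    using u a C by (auto simp: centering_mat_def scalar_prod_def atLeast0LessThan intro!: sum.cong)
      (simp add: algebra_simps)
  also have "\<dots> = C $$ (u, a) - (\<Sum>v<k. C $$ (v, a)) / real k"
    using u by (simp add: sum_subtractf sum_divide_distrib)
  finally show ?thesis .
qed

lemma mtrace_centering_mat:
  assumes A: "A \<in> carrier_mat k t" and C: "C \<in> carrier_mat k t"
  shows "mtrace (transpose_mat A * centering_mat k * C) =
    (\<Sum>a<t. centered_inner k (\<lambda>u. A $$ (u, a)) (\<lambda>u. C $$ (u, a)))"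
proof -
  have diag: "(transpose_mat A * centering_mat k * C) $$ (a, a) =
      centered_inner k (\<lambda>u. A $$ (u, a)) (\<lambda>u. C $$ (u, a))" if a: "a < t" for a
  proof -
    have "(transpose_mat A * centering_mat k * C) $$ (a, a) =
        (\<Sum>u<k. A $$ (u, a) * (centering_mat k * C) $$ (u, a))"
      using A C a by (auto simp: assoc_mult_mat[of _ t k _ k C t] scalar_prod_def atLeast0LessThan
          intro!: sum.cong)
    also have "\<dots> = (\<Sum>u<k. A $$ (u, a) * (C $$ (u, a) - (\<Sum>v<k. C $$ (v, a)) / real k))"
      using centering_mat_mult_entry[OF C _ a] by simp
    also have "\<dots> = centered_inner k (\<lambda>u. A $$ (u, a)) (\<lambda>u. C $$ (u, a))"
      unfolding centered_inner_def
      by (simp add: right_diff_distrib sum_subtractf sum_distrib_right[symmetric] sum_divide_distrib[symmetric])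
    finally show ?thesis .
  qed
  show ?thesis unfolding mtrace_def using A by (simp add: diag)
qed

lemma pos_def_mat_invertible:
  assumes "pos_def_mat k S"
  obtains X where "X \<in> carrier_mat k k" "S * X = 1\<^sub>m k" "X * S = 1\<^sub>m k"
proof -
  have S: "S \<in> carrier_mat k k" using assms unfolding pos_def_mat_def by auto
  have "det S \<noteq> 0"
  proof
    assume "det S = 0"
    then obtain v where v: "v \<in> carrier_vec k" "v \<noteq> 0\<^sub>v k" "S *\<^sub>v v = 0\<^sub>v k"
      using det_0_iff_vec_prod_zero[OF S] by auto
    then have "v \<bullet> (S *\<^sub>v v) > 0" using assms unfolding pos_def_mat_def by auto
    with v show False by simp
  qed
  from det_non_zero_imp_unit[OF S this, of "()"]
  show ?thesis using that unfolding Units_def ring_mat_def by auto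
qed

lemma minv_eqI:
  assumes S: "S \<in> carrier_mat k k" and X: "X \<in> carrier_mat k k"
    and SX: "S * X = 1\<^sub>m k" and XS: "X * S = 1\<^sub>m k"
  shows "minv S = X"
  unfolding minv_def
proof (rule the_equality)
  fix Y assume Y: "Y \<in> carrier_mat (dim_row S) (dim_row S) \<and> S * Y = 1\<^sub>m (dim_row S) \<and>
    Y * S = 1\<^sub>m (dim_row S)"
  then have Yc: "Y \<in> carrier_mat k k" using S by auto
  have "Y = Y * (S * X)" using SX Yc by simp
  also have "\<dots> = (Y * S) * X" using assoc_mult_mat[OF Yc S X] by simp
  finally show "Y = X" using Y S X by simp
qed (use assms in auto)

lemma Bt_mult_right:
  assumes S: "S \<in> carrier_mat k k" and X: "X \<in> carrier_mat k k"
    and SX: "S * X = 1\<^sub>m k" and XS: "X * S = 1\<^sub>m k"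
    and g: "g \<in> carrier_vec k" and Sg: "S *\<^sub>v g = \<gamma> \<cdot>\<^sub>v vec k (\<lambda>_. 1)"
    and sum_g: "vec k (\<lambda>_. 1) \<bullet> g = 1"
  shows "Bt k S * S = 1\<^sub>m k - mat k k (\<lambda>(i, j). g $ i)"
proof -
  define one where "one = vec k (\<lambda>_. 1::real)"
  define J where "J = mat k k (\<lambda>_. 1::real)"
  define h where "h = X *\<^sub>v one"
  have one: "one \<in> carrier_vec k" and Jc: "J \<in> carrier_mat k k"
    and hc: "h \<in> carrier_vec k" unfolding one_def J_def h_def using X by simp_all
  have gh: "g = \<gamma> \<cdot>\<^sub>v h"
  proof -
    have "g = (X * S) *\<^sub>v g" using XS g by simp
    also have "\<dots> = X *\<^sub>v (S *\<^sub>v g)" using X S g by simp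
    finally show ?thesis unfolding Sg h_def one_def[symmetric] using X one by (simp add: mult_mat_vec)
  qed
  have \<gamma>h: "\<gamma> * (one \<bullet> h) = 1" using sum_g one hc unfolding gh one_def by simp
  then have "one \<bullet> h \<noteq> 0" by auto
  with \<gamma>h have \<gamma>: "1 / (one \<bullet> h) = \<gamma>" by (simp add: field_simps)
  have Bt: "Bt k S = X - \<gamma> \<cdot>\<^sub>m (X * J * X)"
    unfolding Bt_def minv_eqI[OF S X SX XS] \<gamma>[symmetric] h_def one_def J_def ..
  have XJX: "X * J * X \<in> carrier_mat k k" using X Jc by simp
  have "Bt k S * S = X * S - (\<gamma> \<cdot>\<^sub>m (X * J * X)) * S"
    unfolding Bt by (rule minus_mult_distrib_mat[OF X _ S]) (use XJX in simp)
  also have "(\<gamma> \<cdot>\<^sub>m (X * J * X)) * S = \<gamma> \<cdot>\<^sub>m (X * J * (X * S))"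
    unfolding mult_smult_assoc_mat[OF XJX S] using assoc_mult_mat[OF mult_carrier_mat[OF X Jc] X S]
    by simp
  also have "\<dots> = \<gamma> \<cdot>\<^sub>m (X * J)" using XS X Jc by simp
  also have "\<gamma> \<cdot>\<^sub>m (X * J) = mat k k (\<lambda>(i, j). g $ i)"
  proof (rule eq_matI)
    fix i j assume "i < dim_row (mat k k (\<lambda>(i, j). g $ i))" "j < dim_col (mat k k (\<lambda>(i, j). g $ i))"
    then have i: "i < k" and j: "j < k" by auto
    have "col J j = one" unfolding J_def one_def using j by auto
    then show "(\<gamma> \<cdot>\<^sub>m (X * J)) $$ (i, j) = mat k k (\<lambda>(i, j). g $ i) $$ (i, j)"
      using i j X Jc hc unfolding gh h_def by simp
  qed (use X Jc in auto)
  finally show ?thesis using XS by simp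
qed

lemma type_H_weights:
  fixes \<eta> :: "real vec"
  assumes \<eta>: "\<eta> \<in> carrier_vec k" and k: "0 < k"
    and S: "S = 1\<^sub>m k + mat k k (\<lambda>(i, j). \<eta> $ i) + mat k k (\<lambda>(i, j). \<eta> $ j)"
  defines "g \<equiv> vec k (\<lambda>i. (1 + (\<Sum>l<k. \<eta> $ l)) / real k - \<eta> $ i)"
  shows "S *\<^sub>v g = ((1 + (\<Sum>l<k. \<eta> $ l)) / real k + \<eta> \<bullet> g) \<cdot>\<^sub>v vec k (\<lambda>_. 1)"
    and "vec k (\<lambda>_. 1) \<bullet> g = 1"
    and "centering_mat k * S = 1\<^sub>m k - mat k k (\<lambda>(i, j). g $ i)"
proof -
  define se where "se = (\<Sum>l<k. \<eta> $ l)"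
  have Sc: "S \<in> carrier_mat k k" unfolding S by simp
  have gc: "g \<in> carrier_vec k" unfolding g_def by simp
  have Sij: "S $$ (i, j) = (if i = j then 1 else 0) + \<eta> $ i + \<eta> $ j" if "i < k" "j < k" for i j
    using that unfolding S by simp
  have sum_g: "(\<Sum>i<k. g $ i) = 1"
    unfolding g_def using k by (simp add: sum_subtractf)
  then show "vec k (\<lambda>_. 1) \<bullet> g = 1" unfolding g_def by (simp add: scalar_prod_def atLeast0LessThan)
  show "S *\<^sub>v g = ((1 + se) / real k + \<eta> \<bullet> g) \<cdot>\<^sub>v vec k (\<lambda>_. 1)"
  proof (rule eq_vecI)
    fix i assume "i < dim_vec (((1 + se) / real k + \<eta> \<bullet> g) \<cdot>\<^sub>v vec k (\<lambda>_. 1::real))"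
    then have i: "i < k" by simp
    have "(S *\<^sub>v g) $ i = (\<Sum>j<k. (if i = j then g $ j else 0) + \<eta> $ i * g $ j + \<eta> $ j * g $ j)"
      using i Sc gc by (auto simp: scalar_prod_def atLeast0LessThan Sij algebra_simps intro!: sum.cong)
    also have "\<dots> = g $ i + \<eta> $ i * (\<Sum>j<k. g $ j) + \<eta> \<bullet> g"
      using i \<eta> by (simp add: sum.distrib sum_distrib_left g_def scalar_prod_def atLeast0LessThan)
    finally show "(S *\<^sub>v g) $ i = (((1 + se) / real k + \<eta> \<bullet> g) \<cdot>\<^sub>v vec k (\<lambda>_. 1)) $ i"
      using i unfolding sum_g by (simp add: g_def se_def)
  qed (use Sc in simp)
  show "centering_mat k * S = 1\<^sub>m k - mat k k (\<lambda>(i, j). g $ i)"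
  proof (rule eq_matI)
    fix i j assume "i < dim_row (1\<^sub>m k - mat k k (\<lambda>(i, j). g $ i))"
      and "j < dim_col (1\<^sub>m k - mat k k (\<lambda>(i, j). g $ i))"
    then have i: "i < k" and j: "j < k" by auto
    have col_sum: "(\<Sum>l<k. S $$ (l, j)) = 1 + se + real k * \<eta> $ j"
    proof -
      have "(\<Sum>l<k. S $$ (l, j)) = (\<Sum>l<k. (if l = j then 1 else 0) + \<eta> $ l + \<eta> $ j)"
        by (rule sum.cong) (auto simp: Sij j)
      then show ?thesis using j unfolding se_def by (simp add: sum.distrib)
    qed
    have "(centering_mat k * S) $$ (i, j) = S $$ (i, j) - (\<Sum>l<k. S $$ (l, j)) / real k"
      by (rule centering_mat_mult_entry[OF Sc i j])
    also have "\<dots> = (if i = j then 1 else 0) - g $ i"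
      unfolding col_sum Sij[OF i j] g_def using i k by (simp add: se_def field_simps)
    finally show "(centering_mat k * S) $$ (i, j) = (1\<^sub>m k - mat k k (\<lambda>(i, j). g $ i)) $$ (i, j)"
      using i j by simp
  qed (use Sc in auto)
qed

lemma Bt_type_H:
  assumes H: "type_H k S" and k: "0 < k"
  shows "Bt k S = centering_mat k"
proof -
  have pd: "pos_def_mat k S" using H unfolding type_H_def by auto
  then have S: "S \<in> carrier_mat k k" unfolding pos_def_mat_def by auto
  obtain \<eta> where \<eta>: "\<eta> \<in> carrier_vec k"
    and S_eq: "S = 1\<^sub>m k + mat k k (\<lambda>(i, j). \<eta> $ i) + mat k k (\<lambda>(i, j). \<eta> $ j)"
    using H unfolding type_H_def by auto
  obtain X where X: "X \<in> carrier_mat k k" and SX: "S * X = 1\<^sub>m k" and XS: "X * S = 1\<^sub>m k"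
    using pos_def_mat_invertible[OF pd] by blast
  note weights = type_H_weights[OF \<eta> k S_eq]
  have BtS: "Bt k S * S = centering_mat k * S"
    unfolding weights(3) by (rule Bt_mult_right[OF S X SX XS _ weights(1,2)]) simp
  have Btc: "Bt k S \<in> carrier_mat k k"
    unfolding Bt_def minv_eqI[OF S X SX XS]
    using X by (intro minus_carrier_mat smult_carrier_mat mult_carrier_mat[of _ k k] mat_carrier)
  have "Bt k S = (Bt k S * S) * X" using Btc S X SX by simp
  also have "\<dots> = centering_mat k"
    unfolding BtS assoc_mult_mat[OF centering_mat_carrier S X] SX by simp
  finally show ?thesis .
qed

section \<open>The information matrix under type-H\<close>

lemma Suc_mod_less: "u < k \<Longrightarrow> Suc u mod k = (if Suc u = k then 0 else Suc u)"
  by (simp add: Suc_lessI)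

lemma bij_betw_Suc_mod: "0 < k \<Longrightarrow> bij_betw (\<lambda>u. Suc u mod k) {..<k} {..<k}"
proof -
  assume k: "0 < k"
  have inj: "inj_on (\<lambda>u. Suc u mod k) {..<k}"
    by (rule inj_onI) (auto simp: Suc_mod_less split: if_splits)
  moreover have "(\<lambda>u. Suc u mod k) ` {..<k} = {..<k}"
    by (rule endo_inj_surj[OF _ _ inj]) (use k in auto)
  ultimately show ?thesis unfolding bij_betw_def by blast
qed

lemma Hmat_entry: "u < k \<Longrightarrow> l < k \<Longrightarrow> Hmat k $$ (u, l) = (if u = Suc l mod k then 1 else 0)"
  unfolding Hmat_def by simp

lemma Hmat_mult_entry:
  assumes T: "T \<in> carrier_mat k t" and u: "u < k" and a: "a < t"
  shows "(Hmat k * T) $$ (u, a) = T $$ (inv_into {..<k} (\<lambda>u. Suc u mod k) u, a)"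
proof -
  let ?\<sigma> = "\<lambda>u. Suc u mod k"
  have bij: "bij_betw ?\<sigma> {..<k} {..<k}" using u by (intro bij_betw_Suc_mod) simp
  have "(Hmat k * T) $$ (u, a) = (\<Sum>l<k. Hmat k $$ (u, l) * T $$ (l, a))"
    using T u a by (simp add: Hmat_def scalar_prod_def atLeast0LessThan)
  also have "\<dots> = (\<Sum>l<k. if l = inv_into {..<k} ?\<sigma> u then T $$ (l, a) else 0)"
    by (rule sum.cong) (use u in \<open>auto simp: Hmat_entry bij_betw_inv_into_left[OF bij]
        bij_betw_inv_into_right[OF bij]\<close>)
  also have "\<dots> = T $$ (inv_into {..<k} ?\<sigma> u, a)"
    using bij_betw_apply[OF bij_betw_inv_into[OF bij]] u by simp
  finally show ?thesis .
qed

lemma transpose_Hmat_mult_entry: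
  assumes T: "T \<in> carrier_mat k t" and u: "u < k" and a: "a < t"
  shows "(transpose_mat (Hmat k) * T) $$ (u, a) = T $$ (Suc u mod k, a)"
proof -
  have "(transpose_mat (Hmat k) * T) $$ (u, a) = (\<Sum>l<k. Hmat k $$ (l, u) * T $$ (l, a))"
    using T u a by (simp add: Hmat_def scalar_prod_def atLeast0LessThan)
  also have "\<dots> = (\<Sum>l<k. if l = Suc u mod k then T $$ (l, a) else 0)"
    by (rule sum.cong) (use u in \<open>auto simp: Hmat_entry\<close>)
  also have "\<dots> = T $$ (Suc u mod k, a)" using u by simp
  finally show ?thesis .
qed

text \<open>Row u of G_i is row cshift k i u of T_s: H shifts rows cyclically down, H' up.\<close>
definition cshift :: "nat \<Rightarrow> nat \<Rightarrow> nat \<Rightarrow> nat" where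
  "cshift k i = (if i = 0 then id
     else if i = 1 then inv_into {..<k} (\<lambda>u. Suc u mod k) else (\<lambda>u. Suc u mod k))"

lemma bij_betw_cshift: "0 < k \<Longrightarrow> bij_betw (cshift k i) {..<k} {..<k}"
  unfolding cshift_def using bij_betw_Suc_mod bij_betw_inv_into by auto

lemma cshift_inverse: "0 < k \<Longrightarrow> u < k \<Longrightarrow> cshift k 2 (cshift k 1 u) = u"
  unfolding cshift_def by (simp add: bij_betw_inv_into_right[OF bij_betw_Suc_mod])

lemma Gmat_carrier [simp]: "Gmat k t s i \<in> carrier_mat k t"
  unfolding Gmat_def Tmat_def Hmat_def by (auto intro!: mult_carrier_mat[of _ k k])

lemma Gmat_entry:
  assumes "u < k" and "a < t"
  shows "Gmat k t s i $$ (u, a) = Tmat k t s $$ (cshift k i u, a)"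
proof -
  have T: "Tmat k t s \<in> carrier_mat k t" unfolding Tmat_def by simp
  show ?thesis
    using Hmat_mult_entry[OF T assms] transpose_Hmat_mult_entry[OF T assms]
    unfolding Gmat_def cshift_def by simp
qed

lemma cshift_gram_structure:
  fixes col :: "nat \<Rightarrow> nat \<Rightarrow> real" and t :: nat
  assumes k: "0 < k"
  defines "\<tau> i j \<equiv> \<Sum>a<t. centered_inner k (col a \<circ> cshift k i) (col a \<circ> cshift k j)"
  shows "\<tau> i i = \<tau> 0 0" and "\<tau> j i = \<tau> i j" and "\<tau> 0 2 = \<tau> 0 1"
    and "\<tau> 0 0 * (x*x + y*y + z*z) + 2 * \<tau> 0 1 * (x*y + x*z) + 2 * \<tau> 1 2 * (y*z) \<ge> 0"
proof -
  have id: "cshift k 0 = id" unfolding cshift_def by simp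
  show diag: "\<tau> i i = \<tau> 0 0" for i
    unfolding \<tau>_def id using centered_inner_reindex[OF bij_betw_cshift[OF k]] by simp
  show sym: "\<tau> j i = \<tau> i j" for i j
    unfolding \<tau>_def by (simp add: centered_inner_commute)
  have "centered_inner k (col a) (col a \<circ> cshift k 2) = centered_inner k (col a) (col a \<circ> cshift k 1)"
    for a
  proof -
    have "centered_inner k (col a) (col a \<circ> cshift k 2) =
        centered_inner k (col a \<circ> cshift k 1) (col a \<circ> cshift k 2 \<circ> cshift k 1)"
      using centered_inner_reindex[OF bij_betw_cshift[OF k, of 1], of "col a" "col a \<circ> cshift k 2"]
      by (simp add: comp_assoc)
    also have "\<dots> = centered_inner k (col a \<circ> cshift k 1) (col a)"
      by (rule centered_inner_cong) (use cshift_inverse[OF k] in simp_all)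
    finally show ?thesis by (simp add: centered_inner_commute)
  qed
  then show shift: "\<tau> 0 2 = \<tau> 0 1" unfolding \<tau>_def id by simp
  have "0 \<le> (\<Sum>a<t. centered_inner k
      (\<lambda>u. x * (col a \<circ> cshift k 0) u + y * (col a \<circ> cshift k 1) u + z * (col a \<circ> cshift k 2) u)
      (\<lambda>u. x * (col a \<circ> cshift k 0) u + y * (col a \<circ> cshift k 1) u + z * (col a \<circ> cshift k 2) u))"
    by (simp add: sum_nonneg centered_inner_self_nonneg)
  also have "\<dots> = x*x * \<tau> 0 0 + y*y * \<tau> 1 1 + z*z * \<tau> 2 2
      + 2*x*y * \<tau> 0 1 + 2*x*z * \<tau> 0 2 + 2*y*z * \<tau> 1 2"
    unfolding centered_inner_quadratic \<tau>_def by (simp add: sum.distrib sum_distrib_left comp_def)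
  finally show "\<tau> 0 0 * (x*x + y*y + z*z) + 2 * \<tau> 0 1 * (x*y + x*z) + 2 * \<tau> 1 2 * (y*z) \<ge> 0"
    using diag[of 1] diag[of 2] shift by (simp add: algebra_simps)
qed

lemma mtrace_Cs_type_H:
  assumes H: "type_H k S" and k: "0 < k"
  shows "mtrace (Cs k t S s i j) = (\<Sum>a<t. centered_inner k
    ((\<lambda>u. Tmat k t s $$ (u, a)) \<circ> cshift k i) ((\<lambda>u. Tmat k t s $$ (u, a)) \<circ> cshift k j))"
  unfolding Cs_def Bt_type_H[OF H k] mtrace_centering_mat[OF Gmat_carrier Gmat_carrier]
  by (auto intro!: sum.cong centered_inner_cong simp: Gmat_entry)

lemma cxi_eq_sum: "cxi k t S p i j = (\<Sum>s\<in>seqs k t. p s * mtrace (Cs k t S s i j))"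
proof -
  have dim: "dim_row (Cs k t S s i j) = t" for s
    unfolding Cs_def using carrier_matD(2)[OF Gmat_carrier[of k t s i]] by simp
  have "cxi k t S p i j = (\<Sum>a<t. \<Sum>s\<in>seqs k t. p s * Cs k t S s i j $$ (a, a))"
    unfolding cxi_def mtrace_def Cxi_def by simp
  also have "\<dots> = (\<Sum>s\<in>seqs k t. \<Sum>a<t. p s * Cs k t S s i j $$ (a, a))" by (rule sum.swap)
  finally show ?thesis unfolding mtrace_def dim by (simp add: sum_distrib_left)
qed

lemma Vxi_type_H:
  assumes H: "type_H k S" and k: "0 < k" and p: "\<forall>s\<in>seqs k t. p s \<ge> 0"
  defines "a \<equiv> cxi k t S p 0 0" and "b \<equiv> cxi k t S p 0 1" and "c \<equiv> cxi k t S p 1 2"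
  shows "vmat_psd a b c" and "Vxi k t S p = vmat a b c" and "Qxi k t S p = mat2 a c c a"
    and "cxi k t S p 0 2 = b" and "cxi k t S p 1 0 = b" and "cxi k t S p 2 0 = b"
proof -
  define \<tau> where "\<tau> s i j = (\<Sum>a<t. centered_inner k
    ((\<lambda>u. Tmat k t s $$ (u, a)) \<circ> cshift k i) ((\<lambda>u. Tmat k t s $$ (u, a)) \<circ> cshift k j))" for s i j
  have cxi: "cxi k t S p i j = (\<Sum>s\<in>seqs k t. p s * \<tau> s i j)" for i j
    unfolding cxi_eq_sum mtrace_Cs_type_H[OF H k] \<tau>_def ..
  note gram = cshift_gram_structure[OF k, where col = "\<lambda>a u. Tmat k t s $$ (u, a)" and t = t for s,
      folded \<tau>_def]
  have diag: "cxi k t S p i i = a" for i unfolding a_def cxi gram(1)[of _ i] ..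
  have sym: "cxi k t S p j i = cxi k t S p i j" for i j unfolding cxi gram(2)[of _ j i] ..
  have shift: "cxi k t S p 0 2 = b" unfolding b_def cxi gram(3) ..
  show "vmat_psd a b c"
    unfolding vmat_psd_def
  proof (intro allI)
    fix x y z :: real
    have "a * (x*x + y*y + z*z) + 2*b * (x*y + x*z) + 2*c * (y*z) =
        (\<Sum>s\<in>seqs k t. p s * (\<tau> s 0 0 * (x*x + y*y + z*z) + 2 * \<tau> s 0 1 * (x*y + x*z)
          + 2 * \<tau> s 1 2 * (y*z)))"
      unfolding a_def b_def c_def cxi
      by (simp add: sum_distrib_left sum.distrib algebra_simps)
    also have "\<dots> \<ge> 0"
      by (rule sum_nonneg) (use p gram(4) in \<open>auto intro!: mult_nonneg_nonneg\<close>)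
    finally show "a * (x*x + y*y + z*z) + 2*b * (x*y + x*z) + 2*c * (y*z) \<ge> 0" .
  qed
  show c02: "cxi k t S p 0 2 = b" by (rule shift)
  show c10: "cxi k t S p 1 0 = b" unfolding b_def by (rule sym)
  show c20: "cxi k t S p 2 0 = b" using sym[of 0 2] c02 by simp
  have c21: "cxi k t S p 2 1 = c" unfolding c_def by (rule sym)
  show "Vxi k t S p = vmat a b c"
    by (rule eq_matI) (auto simp: Vxi_def vmat_def less_3_cases diag c02 c20
        c10[unfolded One_nat_def] c21[unfolded One_nat_def]
        b_def[symmetric, unfolded One_nat_def] c_def[symmetric, unfolded One_nat_def])
  show "Qxi k t S p = mat2 a c c a"
    by (rule eq_matI) (auto simp: Qxi_def mat2_def less_2_cases diag
        c21[unfolded One_nat_def numeral_2_eq_2] c_def[symmetric, unfolded One_nat_def numeral_2_eq_2])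
qed

theorem lemma2:
  fixes k t :: nat and S :: "real mat" and p :: "nat list \<Rightarrow> real"
    and lam lam1 lam2 :: real
  assumes "k \<ge> 2" and "t \<ge> 2"
    and "type_H k S"
    and "is_measure k t p"
  shows "qstar2 k t S p lam = qstar k t S p \<and>
    (1 + 2 * lam \<noteq> 0 \<and> 1 + lam1 + lam2 \<noteq> 0 \<longrightarrow>
       qstar3 k t S p lam / (1 + 2 * lam)^2 = qstar1 k t S p lam1 lam2 / (1 + lam1 + lam2)^2)"
proof -
  define a b c where "a = cxi k t S p 0 0" and "b = cxi k t S p 0 1" and "c = cxi k t S p 1 2"
  have k: "0 < k" using \<open>k \<ge> 2\<close> by simp
  have "\<forall>s\<in>seqs k t. p s \<ge> 0" using \<open>is_measure k t p\<close> unfolding is_measure_def by simp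
  note V = Vxi_type_H[OF \<open>type_H k S\<close> k this, folded a_def b_def c_def]
  let ?z = "qvec (vmat a b c) (vec_of_list [1, 0, 0]) (vec_of_list [2, -1, -1])"
  have q: "qstar k t S p = a - 2*b*b * sc_pinv (a + c)"
    unfolding qstar_def V(3-6) a_def[symmetric] b_def[symmetric]
    by (simp only: quadratic_form_mp_inv_mat2_equal_entries)
  have "qstar2 k t S p lam = qstar k t S p"
    unfolding qstar2_def V(2) q by (rule qvec_vmat_ell2[OF V(1)])
  moreover have "qstar3 k t S p lam = (1 + 2 * lam)^2 * ?z"
    unfolding qstar3_def V(2) by (rule qvec_vmat_ell3[OF V(1)])
  moreover have "qstar1 k t S p lam1 lam2 = (1 + lam1 + lam2)^2 * ?z" if "1 + lam1 + lam2 \<noteq> 0"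
    unfolding qstar1_def V(2) Let_def qmat_def[symmetric] by (rule qmat_vmat_L0[OF V(1) that])
  ultimately show ?thesis by auto
qed

end
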